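(* In the setting below, if $\alpha=0$ or $\alpha$ is a limit ordinal, then there exists $x\in M_{\alpha+1}$ such that $\bigcup x\notin M$.
   Context: Work in ZFA (ZF with a set $A$ of atoms, i.e. urelements that have no elements), extended by a primitive binary relation $\preccurlyeq$ on $A$, with Separation and Replacement holding for formulas mentioning $\preccurlyeq$. $A$ is an infinite set of atoms and $\preccurlyeq$ is a pre-ordering (reflexive, transitive) on $A$ with no minimal elements: for every $a\in A$ there is $b\in A$ with $b\preccurlyeq a$ and not $a\preccurlyeq b$. For $a\in A$, $pr(a)=\{b\in A:b\preccurlyeq a\}$; $LO(A,\preccurlyeq)$ is the set of nonempty $x\subseteq A$ with $pr(a)\subseteq x$ for all $a\in x$. For a set $X$ of sets, $LO(X,\subseteq)$ is the set of nonempty $x\subseteq X$ such that for every $y\in x$ and every $z\in X$ with $z\subseteq y$, $z\in x$. The magmatic hierarchy: $M_1=LO(A,\preccurlyeq)$; $M_{\alpha+1}=LO(M_\alpha,\subseteq)$ for $\alpha\geq1$; $M_\alpha=\bigcup_{1\leq\beta<\alpha}M_\beta$ for limit $\alpha$; $M=\bigcup_{\alpha\geq1}M_\alpha$. $\bigcup x=\{z:\exists y\in x\,(z\in y)\}$, where atoms have no elements (so $\bigcup x=\emptyset$ if $x\subseteq A$). *)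

theory Defs
  imports Main
begin

text \<open>Separation and Replacement are stated
second-order (for arbitrary HOL predicates / functions), which in particular covers
all formulas mentioning the primitive relation le (the pre-ordering on A).\<close>

definition elts :: "('v \<Rightarrow> 'v \<Rightarrow> bool) \<Rightarrow> 'v \<Rightarrow> 'v set" where
  "elts mem x = {z. mem z x}"

locale zfa =
  fixes mem :: "'v \<Rightarrow> 'v \<Rightarrow> bool"
    and atom :: "'v \<Rightarrow> bool"
    and A :: 'v
    and le :: "'v \<Rightarrow> 'v \<Rightarrow> bool"
  assumes atom_no_elts: "atom a \<Longrightarrow> \<not> mem x a"
    and extensionality: "\<not> atom x \<Longrightarrow> \<not> atom y \<Longrightarrow> (\<forall>z. mem z x \<longleftrightarrow> mem z y) \<Longrightarrow> x = y"
    and foundation: "wf {(x, y). mem x y}"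
    and pairing: "\<exists>z. \<not> atom z \<and> (\<forall>w. mem w z \<longleftrightarrow> w = x \<or> w = y)"
    and union: "\<exists>u. \<not> atom u \<and> (\<forall>z. mem z u \<longleftrightarrow> (\<exists>y. mem y x \<and> mem z y))"
    and power: "\<exists>p. \<not> atom p \<and> (\<forall>z. mem z p \<longleftrightarrow> \<not> atom z \<and> (\<forall>w. mem w z \<longrightarrow> mem w x))"
    and separation: "\<exists>y. \<not> atom y \<and> (\<forall>z. mem z y \<longleftrightarrow> mem z x \<and> P z)"
    and replacement: "\<exists>y. \<not> atom y \<and> (\<forall>z. mem z y \<longleftrightarrow> (\<exists>w. mem w x \<and> z = f w))"
    and infinity: "\<exists>I. \<not> atom I \<and> (\<exists>e. mem e I \<and> \<not> atom e \<and> (\<forall>w. \<not> mem w e))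
                    \<and> (\<forall>y. mem y I \<longrightarrow> (\<exists>s. mem s I \<and> \<not> atom s \<and> (\<forall>w. mem w s \<longleftrightarrow> mem w y \<or> w = y)))"
    and A_set: "\<not> atom A"
    and A_atoms: "mem a A \<Longrightarrow> atom a"
    and A_infinite: "infinite (elts mem A)"
    and le_refl: "mem a A \<Longrightarrow> le a a"
    and le_trans: "mem a A \<Longrightarrow> mem b A \<Longrightarrow> mem c A \<Longrightarrow> le a b \<Longrightarrow> le b c \<Longrightarrow> le a c"
    and no_minimal: "mem a A \<Longrightarrow> \<exists>b. mem b A \<and> le b a \<and> \<not> le a b"

definition transset :: "('v \<Rightarrow> 'v \<Rightarrow> bool) \<Rightarrow> ('v \<Rightarrow> bool) \<Rightarrow> 'v \<Rightarrow> bool" where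
  "transset mem atom x \<longleftrightarrow> \<not> atom x \<and> (\<forall>y. mem y x \<longrightarrow> \<not> atom y \<and> (\<forall>z. mem z y \<longrightarrow> mem z x))"

definition Ord :: "('v \<Rightarrow> 'v \<Rightarrow> bool) \<Rightarrow> ('v \<Rightarrow> bool) \<Rightarrow> 'v \<Rightarrow> bool" where
  "Ord mem atom x \<longleftrightarrow> transset mem atom x \<and> (\<forall>y. mem y x \<longrightarrow> transset mem atom y)"

definition succ :: "('v \<Rightarrow> 'v \<Rightarrow> bool) \<Rightarrow> ('v \<Rightarrow> bool) \<Rightarrow> 'v \<Rightarrow> 'v" where
  "succ mem atom x = (THE s. \<not> atom s \<and> (\<forall>w. mem w s \<longleftrightarrow> mem w x \<or> w = x))"

definition Limit :: "('v \<Rightarrow> 'v \<Rightarrow> bool) \<Rightarrow> ('v \<Rightarrow> bool) \<Rightarrow> 'v \<Rightarrow> bool" where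
  "Limit mem atom \<alpha> \<longleftrightarrow> Ord mem atom \<alpha> \<and> elts mem \<alpha> \<noteq> {}
      \<and> \<not> (\<exists>\<beta>. mem \<beta> \<alpha> \<and> \<alpha> = succ mem atom \<beta>)"

definition Uni :: "('v \<Rightarrow> 'v \<Rightarrow> bool) \<Rightarrow> ('v \<Rightarrow> bool) \<Rightarrow> 'v \<Rightarrow> 'v" where
  "Uni mem atom x = (THE u. \<not> atom u \<and> elts mem u = (\<Union>y\<in>elts mem x. elts mem y))"

definition pr :: "('v \<Rightarrow> 'v \<Rightarrow> bool) \<Rightarrow> 'v \<Rightarrow> ('v \<Rightarrow> 'v \<Rightarrow> bool) \<Rightarrow> 'v \<Rightarrow> 'v set" where
  "pr mem A le a = {b \<in> elts mem A. le b a}"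

definition LO_atoms :: "('v \<Rightarrow> 'v \<Rightarrow> bool) \<Rightarrow> ('v \<Rightarrow> bool) \<Rightarrow> 'v \<Rightarrow> ('v \<Rightarrow> 'v \<Rightarrow> bool) \<Rightarrow> 'v set" where
  "LO_atoms mem atom A le = {x. \<not> atom x \<and> elts mem x \<noteq> {} \<and> elts mem x \<subseteq> elts mem A
      \<and> (\<forall>a\<in>elts mem x. pr mem A le a \<subseteq> elts mem x)}"

definition LO_sub :: "('v \<Rightarrow> 'v \<Rightarrow> bool) \<Rightarrow> ('v \<Rightarrow> bool) \<Rightarrow> 'v set \<Rightarrow> 'v set" where
  "LO_sub mem atom X = {x. \<not> atom x \<and> elts mem x \<noteq> {} \<and> elts mem x \<subseteq> X
      \<and> (\<forall>y\<in>elts mem x. \<forall>z\<in>X. elts mem z \<subseteq> elts mem y \<longrightarrow> z \<in> elts mem x)}"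

text \<open>The magmatic hierarchy M_alpha (alpha an ordinal; M_0 is unused and empty).\<close>
definition Mlev :: "('v \<Rightarrow> 'v \<Rightarrow> bool) \<Rightarrow> ('v \<Rightarrow> bool) \<Rightarrow> 'v \<Rightarrow> ('v \<Rightarrow> 'v \<Rightarrow> bool) \<Rightarrow> 'v \<Rightarrow> 'v set" where
  "Mlev mem atom A le = wfrec {(x, y). mem x y}
     (\<lambda>H \<alpha>. if \<not> Ord mem atom \<alpha> then {}
            else if (\<exists>\<beta>. mem \<beta> \<alpha> \<and> \<alpha> = succ mem atom \<beta>) then
              (let \<beta> = (THE \<beta>. mem \<beta> \<alpha> \<and> \<alpha> = succ mem atom \<beta>) in
                 if elts mem \<beta> = {} then LO_atoms mem atom A le else LO_sub mem atom (H \<beta>))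
            else (\<Union>\<beta>\<in>{\<beta>. mem \<beta> \<alpha> \<and> elts mem \<beta> \<noteq> {}}. H \<beta>))"

definition Mclass :: "('v \<Rightarrow> 'v \<Rightarrow> bool) \<Rightarrow> ('v \<Rightarrow> bool) \<Rightarrow> 'v \<Rightarrow> ('v \<Rightarrow> 'v \<Rightarrow> bool) \<Rightarrow> 'v set" where
  "Mclass mem atom A le = (\<Union>\<alpha>\<in>{\<alpha>. Ord mem atom \<alpha> \<and> elts mem \<alpha> \<noteq> {}}. Mlev mem atom A le \<alpha>)"

end

theory Submission
  imports Defs
begin

(* Every member of M is a nonempty set whose elements are either all atoms or all sets: this
   holds for LO(A, \<preccurlyeq>) and is inherited by LO(X, \<subseteq>) whenever X consists of sets.
   For \<alpha> = 0 the union of A \<in> M_1 is empty.  For limit \<alpha> both 1 and 2 lie below \<alpha>, so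
   M_1 \<subseteq> M_\<alpha> and M_1, viewed as a set, belongs to M_2 \<subseteq> M_\<alpha>; the set x of all members of
   M_\<alpha> included in A \<union> M_1 is downward closed, hence in M_(\<alpha>+1), and its union contains
   both the atoms of A and the set A \<in> M_1. *)

context zfa begin

abbreviation el where "el \<equiv> elts mem"
abbreviation sc where "sc \<equiv> succ mem atom"
abbreviation ordinal where "ordinal \<equiv> Ord mem atom"
abbreviation limit where "limit \<equiv> Limit mem atom"
abbreviation Lev where "Lev \<equiv> Mlev mem atom A le"
abbreviation M where "M \<equiv> Mclass mem atom A le"
abbreviation LO where "LO \<equiv> LO_sub mem atom"
abbreviation LO_A where "LO_A \<equiv> LO_atoms mem atom A le"

lemma mem_elts_iff [iff]: "z \<in> el x \<longleftrightarrow> mem z x"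
  by (simp add: elts_def)

lemma set_eqI: "\<not> atom x \<Longrightarrow> \<not> atom y \<Longrightarrow> (\<And>z. mem z x \<longleftrightarrow> mem z y) \<Longrightarrow> x = y"
  using extensionality by blast

lemma mem_induct [case_names step]: "(\<And>x. (\<And>y. mem y x \<Longrightarrow> P y) \<Longrightarrow> P x) \<Longrightarrow> P a"
  using wf_induct_rule[OF foundation, of P] by auto

lemma mem_minimal:
  assumes "x \<in> Q" obtains z where "z \<in> Q" "\<And>y. mem y z \<Longrightarrow> y \<notin> Q"
  using wfE_min[OF foundation assms] by auto

lemma mem_asym: "mem a b \<Longrightarrow> \<not> mem b a"
  using wf_not_sym[OF foundation, of a b] by auto

lemma mem_irrefl: "\<not> mem a a"
  using mem_asym by blast

lemma ex1_set: "\<exists>u. \<not> atom u \<and> (\<forall>z. mem z u \<longleftrightarrow> P z) \<Longrightarrow> \<exists>!u. \<not> atom u \<and> (\<forall>z. mem z u \<longleftrightarrow> P z)"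
  using set_eqI by blast

lemma ex_subset: "(\<And>z. P z \<Longrightarrow> mem z x) \<Longrightarrow> \<exists>y. \<not> atom y \<and> (\<forall>z. mem z y \<longleftrightarrow> P z)"
  using separation[of x P] by blast

lemma ex_Un: "\<exists>u. \<not> atom u \<and> (\<forall>z. mem z u \<longleftrightarrow> mem z a \<or> mem z b)"
proof -
  obtain p where p: "\<forall>w. mem w p \<longleftrightarrow> w = a \<or> w = b" using pairing by blast
  obtain u where u: "\<not> atom u" "\<forall>z. mem z u \<longleftrightarrow> (\<exists>y. mem y p \<and> mem z y)"
    using union by blast
  from u p show ?thesis by (intro exI[of _ u]) auto
qed

lemma ex_set_of_subsets:
  assumes "\<And>z. P z \<Longrightarrow> \<not> atom z \<and> el z \<subseteq> el w"
  shows "\<exists>y. \<not> atom y \<and> (\<forall>z. mem z y \<longleftrightarrow> P z)"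
proof -
  obtain p where "\<forall>z. mem z p \<longleftrightarrow> \<not> atom z \<and> (\<forall>v. mem v z \<longrightarrow> mem v w)"
    using power by blast
  with assms show ?thesis by (intro ex_subset) blast
qed

lemma mem_Uni_iff: "mem z (Uni mem atom x) \<longleftrightarrow> (\<exists>y. mem y x \<and> mem z y)"
proof -
  have eq: "el u = (\<Union>y\<in>el x. el y) \<longleftrightarrow> (\<forall>z. mem z u \<longleftrightarrow> (\<exists>y. mem y x \<and> mem z y))" for u
    by (auto simp: set_eq_iff)
  have "\<exists>!u. \<not> atom u \<and> (\<forall>z. mem z u \<longleftrightarrow> (\<exists>y. mem y x \<and> mem z y))"
    using union by (intro ex1_set) blast
  from theI'[OF this] show ?thesis
    unfolding Uni_def eq by blast
qed

lemma succ_not_atom: "\<not> atom (sc x)"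
  and mem_succ_iff: "mem w (sc x) \<longleftrightarrow> mem w x \<or> w = x"
proof -
  obtain p where "\<forall>w. mem w p \<longleftrightarrow> w = x \<or> w = x" using pairing by blast
  moreover obtain s where "\<not> atom s" "\<forall>w. mem w s \<longleftrightarrow> mem w x \<or> mem w p" using ex_Un by blast
  ultimately have "\<exists>!s. \<not> atom s \<and> (\<forall>w. mem w s \<longleftrightarrow> mem w x \<or> w = x)"
    by (intro ex1_set) blast
  from theI'[OF this] show "\<not> atom (sc x)" "mem w (sc x) \<longleftrightarrow> mem w x \<or> w = x"
    unfolding succ_def by blast+
qed

lemma succ_inject: "sc a = sc b \<Longrightarrow> a = b"
  using mem_succ_iff[of a a] mem_succ_iff[of b b] mem_succ_iff[of a b] mem_succ_iff[of b a] mem_asym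
  by metis

lemma Ord_not_atom: "ordinal a \<Longrightarrow> \<not> atom a"
  unfolding Ord_def transset_def by blast

lemma Ord_in_Ord: "ordinal a \<Longrightarrow> mem b a \<Longrightarrow> ordinal b"
  unfolding Ord_def transset_def by blast

lemma Ord_trans: "ordinal a \<Longrightarrow> mem b a \<Longrightarrow> mem c b \<Longrightarrow> mem c a"
  unfolding Ord_def transset_def by blast

lemma Ord_succ:
  assumes "ordinal a" shows "ordinal (sc a)"
proof -
  have trans: "transset mem atom y" if "mem y (sc a)" for y
    using that assms unfolding mem_succ_iff Ord_def by blast
  then have "\<not> atom y" if "mem y (sc a)" for y
    using that unfolding transset_def by blast
  moreover have "mem z (sc a)" if "mem y (sc a)" "mem z y" for y z
    using that Ord_trans[OF assms] unfolding mem_succ_iff by blast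
  ultimately show ?thesis
    using trans succ_not_atom unfolding Ord_def transset_def by blast
qed

lemma Ord_linear:
  assumes "ordinal a" "ordinal b" shows "mem a b \<or> a = b \<or> mem b a"
  using assms
proof (induction a arbitrary: b rule: mem_induct)
  case (step a)
  note IH_a = step.IH
  from \<open>ordinal b\<close> \<open>ordinal a\<close> show ?case
  proof (induction b rule: mem_induct)
    case (step b)
    show ?case
    proof (rule ccontr)
      assume incomparable: "\<not> (mem a b \<or> a = b \<or> mem b a)"
      have "mem c b" if "mem c a" for c
        using IH_a[OF that Ord_in_Ord[OF \<open>ordinal a\<close> that] \<open>ordinal b\<close>] incomparable
          Ord_trans[OF \<open>ordinal a\<close> that] that by blast
      moreover have "mem c a" if "mem c b" for c
        using step.IH[OF that Ord_in_Ord[OF \<open>ordinal b\<close> that] \<open>ordinal a\<close>] incomparable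
          Ord_trans[OF \<open>ordinal b\<close> that] that by blast
      ultimately have "a = b"
        using Ord_not_atom step.prems by (intro set_eqI) blast+
      with incomparable show False by blast
    qed
  qed
qed

lemma Limit_succ_mem:
  assumes "limit \<alpha>" "mem \<beta> \<alpha>" shows "mem (sc \<beta>) \<alpha>"
proof -
  have "ordinal \<alpha>" using assms(1) unfolding Limit_def by blast
  with assms(2) have "ordinal (sc \<beta>)" using Ord_succ Ord_in_Ord by blast
  with \<open>ordinal \<alpha>\<close> consider "mem (sc \<beta>) \<alpha>" | "sc \<beta> = \<alpha>" | "mem \<alpha> (sc \<beta>)"
    using Ord_linear by blast
  then show ?thesis
  proof cases
    case 2
    with assms show ?thesis unfolding Limit_def by blast
  next
    case 3
    with assms(2) show ?thesis using mem_succ_iff mem_asym mem_irrefl by blast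
  qed
qed

lemma Ord_empty_mem:
  assumes "ordinal \<alpha>" "el \<alpha> \<noteq> {}" obtains z where "mem z \<alpha>" "el z = {}"
proof -
  from assms(2) obtain y where "y \<in> el \<alpha>" by blast
  then obtain z where z: "mem z \<alpha>" "\<And>y. mem y z \<Longrightarrow> \<not> mem y \<alpha>"
    by (rule mem_minimal) simp
  with Ord_trans[OF assms(1)] have "el z = {}" by blast
  with z(1) show ?thesis by (rule that)
qed

lemma Mlev_not_Ord: "\<not> ordinal \<alpha> \<Longrightarrow> Lev \<alpha> = {}"
  unfolding Mlev_def by (subst wfrec[OF foundation]) simp

lemma Mlev_succ:
  assumes "ordinal \<beta>" shows "Lev (sc \<beta>) = (if el \<beta> = {} then LO_A else LO (Lev \<beta>))"
proof -
  have "mem \<beta> (sc \<beta>)" using mem_succ_iff by blast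
  moreover have "(THE \<gamma>. mem \<gamma> (sc \<beta>) \<and> sc \<beta> = sc \<gamma>) = \<beta>"
    using calculation succ_inject by blast
  ultimately show ?thesis
    using Ord_succ[OF assms] unfolding Mlev_def
    by (subst wfrec[OF foundation]) (auto simp: Let_def cut_apply)
qed

lemma Mlev_not_succ:
  assumes "ordinal \<alpha>" "\<nexists>\<beta>. mem \<beta> \<alpha> \<and> \<alpha> = sc \<beta>"
  shows "Lev \<alpha> = (\<Union>\<beta>\<in>{\<beta>. mem \<beta> \<alpha> \<and> el \<beta> \<noteq> {}}. Lev \<beta>)"
  using assms unfolding Mlev_def by (subst wfrec[OF foundation]) (auto simp: cut_apply)

lemma Mlev_subset_Mlev_limit:
  assumes "limit \<alpha>" "mem \<beta> \<alpha>" "el \<beta> \<noteq> {}" shows "Lev \<beta> \<subseteq> Lev \<alpha>"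
  using assms Mlev_not_succ[of \<alpha>] unfolding Limit_def by auto

definition homogeneous :: "'v \<Rightarrow> bool" where
  "homogeneous y \<longleftrightarrow> \<not> atom y \<and> el y \<noteq> {} \<and> ((\<forall>e\<in>el y. atom e) \<or> (\<forall>e\<in>el y. \<not> atom e))"

lemma LO_atoms_homogeneous: "y \<in> LO_A \<Longrightarrow> homogeneous y"
  using A_atoms unfolding LO_atoms_def homogeneous_def by blast

lemma LO_sub_homogeneous: "\<forall>z\<in>X. \<not> atom z \<Longrightarrow> y \<in> LO X \<Longrightarrow> homogeneous y"
  unfolding LO_sub_def homogeneous_def by blast

lemma Mlev_homogeneous: "y \<in> Lev \<alpha> \<Longrightarrow> homogeneous y"
proof (induction \<alpha> arbitrary: y rule: mem_induct)
  case (step \<alpha>)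
  consider "\<not> ordinal \<alpha>" | \<beta> where "ordinal \<alpha>" "mem \<beta> \<alpha>" "\<alpha> = sc \<beta>"
    | "ordinal \<alpha>" "\<nexists>\<beta>. mem \<beta> \<alpha> \<and> \<alpha> = sc \<beta>"
    by blast
  then show ?case
  proof cases
    case 1
    with step.prems show ?thesis by (simp add: Mlev_not_Ord)
  next
    case (2 \<beta>)
    have "\<forall>z\<in>Lev \<beta>. \<not> atom z"
      using step.IH[OF \<open>mem \<beta> \<alpha>\<close>] unfolding homogeneous_def by blast
    with step.prems show ?thesis
      using Mlev_succ[OF Ord_in_Ord[OF 2(1,2)]] 2(3)
      by (auto split: if_splits intro: LO_atoms_homogeneous LO_sub_homogeneous)
  next
    case 3
    with step show ?thesis by (auto simp: Mlev_not_succ)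
  qed
qed

lemma Mclass_homogeneous: "y \<in> M \<Longrightarrow> homogeneous y"
  unfolding Mclass_def using Mlev_homogeneous by blast

lemma empty_notin_Mclass: "el u = {} \<Longrightarrow> u \<notin> M"
  using Mclass_homogeneous unfolding homogeneous_def by blast

lemma mixed_notin_Mclass: "mem a u \<Longrightarrow> atom a \<Longrightarrow> mem b u \<Longrightarrow> \<not> atom b \<Longrightarrow> u \<notin> M"
  using Mclass_homogeneous unfolding homogeneous_def by blast

lemma A_in_LO_atoms: "A \<in> LO_A"
  using A_set A_infinite unfolding LO_atoms_def pr_def by auto

lemma LO_sub_downset:
  assumes "\<forall>z\<in>X. \<not> atom z" "y \<in> X" "el y \<subseteq> el u"
  obtains x where "x \<in> LO X" "el x = {z \<in> X. el z \<subseteq> el u}"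
proof -
  obtain x where x: "\<not> atom x" "\<forall>z. mem z x \<longleftrightarrow> z \<in> X \<and> el z \<subseteq> el u"
    using ex_set_of_subsets[of "\<lambda>z. z \<in> X \<and> el z \<subseteq> el u" u] assms(1) by blast
  with assms(2,3) have "x \<in> LO X"
    unfolding LO_sub_def by blast
  moreover from x(2) have "el x = {z \<in> X. el z \<subseteq> el u}" by blast
  ultimately show ?thesis by (rule that)
qed

lemma Uni_notin_Mclass_zero:
  assumes "ordinal \<alpha>" "el \<alpha> = {}" shows "\<exists>x\<in>Lev (sc \<alpha>). Uni mem atom x \<notin> M"
proof -
  have "A \<in> Lev (sc \<alpha>)" using Mlev_succ[OF assms(1)] assms(2) A_in_LO_atoms by simp
  moreover have "el (Uni mem atom A) = {}" using A_atoms atom_no_elts by (auto simp: mem_Uni_iff)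
  ultimately show ?thesis using empty_notin_Mclass by blast
qed

lemma Mlev_limit_first_levels:
  assumes "limit \<alpha>" shows "LO_A \<subseteq> Lev \<alpha>" "LO LO_A \<subseteq> Lev \<alpha>"
proof -
  have "ordinal \<alpha>" "el \<alpha> \<noteq> {}" using assms unfolding Limit_def by blast+
  then obtain zero where zero: "mem zero \<alpha>" "el zero = {}" by (rule Ord_empty_mem)
  define one where "one = sc zero"
  define two where "two = sc one"
  have one: "mem one \<alpha>" and two: "mem two \<alpha>"
    unfolding one_def two_def using Limit_succ_mem[OF assms] zero(1) by blast+
  have "el one \<noteq> {}" "el two \<noteq> {}" unfolding one_def two_def using mem_succ_iff by blast+
  moreover have "Lev one = LO_A" "Lev two = LO LO_A"
    using Mlev_succ[OF Ord_in_Ord] \<open>ordinal \<alpha>\<close> zero one \<open>el one \<noteq> {}\<close> unfolding one_def two_def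
    by simp_all
  ultimately show "LO_A \<subseteq> Lev \<alpha>" "LO LO_A \<subseteq> Lev \<alpha>"
    using Mlev_subset_Mlev_limit[OF assms] one two by blast+
qed

lemma Uni_notin_Mclass_limit:
  assumes "limit \<alpha>" shows "\<exists>x\<in>Lev (sc \<alpha>). Uni mem atom x \<notin> M"
proof -
  note LO_A_sub = Mlev_limit_first_levels(1)[OF assms]
    and LO_LO_A_sub = Mlev_limit_first_levels(2)[OF assms]
  have sets: "\<forall>y\<in>Lev \<alpha>. \<not> atom y"
    using Mlev_homogeneous unfolding homogeneous_def by blast
  obtain m where m: "m \<in> LO LO_A" "el m = {z \<in> LO_A. el z \<subseteq> el A}"
    using LO_sub_downset[of LO_A A A] sets LO_A_sub A_in_LO_atoms by blast
  obtain u where u: "\<forall>z. mem z u \<longleftrightarrow> mem z A \<or> mem z m" using ex_Un by blast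
  obtain x where x: "x \<in> LO (Lev \<alpha>)" "el x = {z \<in> Lev \<alpha>. el z \<subseteq> el u}"
    using LO_sub_downset[of "Lev \<alpha>" A u] sets LO_A_sub A_in_LO_atoms u by blast
  have "x \<in> Lev (sc \<alpha>)"
    using x(1) Mlev_succ[of \<alpha>] assms unfolding Limit_def by simp
  moreover have "Uni mem atom x \<notin> M"
  proof -
    have "el A \<noteq> {}" using A_infinite by auto
    then obtain a where "mem a A" by blast
    have "mem A x" using x(2) LO_A_sub A_in_LO_atoms u by blast
    moreover have "mem m x" using x(2) LO_LO_A_sub m u by blast
    moreover have "mem A m" using m(2) A_in_LO_atoms by blast
    ultimately show ?thesis
      using mixed_notin_Mclass[of a _ A] \<open>mem a A\<close> A_atoms A_set mem_Uni_iff by blast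
  qed
  ultimately show ?thesis by blast
qed

end

theorem fact4p13:
  fixes mem :: "'v \<Rightarrow> 'v \<Rightarrow> bool" and atom :: "'v \<Rightarrow> bool" and A :: 'v
    and le :: "'v \<Rightarrow> 'v \<Rightarrow> bool" and \<alpha> :: 'v
  assumes "zfa mem atom A le"
    and "Ord mem atom \<alpha>"
    and "elts mem \<alpha> = {} \<or> Limit mem atom \<alpha>"
  shows "\<exists>x \<in> Mlev mem atom A le (succ mem atom \<alpha>). Uni mem atom x \<notin> Mclass mem atom A le"
proof -
  interpret zfa mem atom A le by fact
  from assms(3) show ?thesis
    using Uni_notin_Mclass_zero[OF assms(2)] Uni_notin_Mclass_limit by blast
qed

end
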